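(* Let $n\ge 1$. Every probability distribution $p$ on $\{0,1\}^n$ can be approximated arbitrarily well by the visible marginal distribution of an RBM with $n$ visible units and $\frac{2^n}{2}-1$ hidden units; that is, for every $\varepsilon>0$ there exist parameters $W,B,C$ of such an RBM whose visible marginal $q$ satisfies $D(p\,\|\,q)<\varepsilon$.
   Context: A Restricted Boltzmann Machine (RBM) with $n$ visible units and $m$ hidden units has parameters $W\in\mathbb{R}^{m\times n}$, $B\in\mathbb{R}^n$, $C\in\mathbb{R}^m$, and defines the joint distribution $p(v,h)=\frac{1}{Z}\exp(h^T W v + B\cdot v + C\cdot h)$ on $(v,h)\in\{0,1\}^n\times\{0,1\}^m$, where $Z$ is the normalizing constant; its visible marginal distribution is $q(v)=\sum_{h\in\{0,1\}^m}p(v,h)$. $D(p\|q)=\sum_v p(v)\log\frac{p(v)}{q(v)}$ denotes the Kullback–Leibler divergence. *)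

theory Defs
  imports "HOL-Analysis.Analysis"
begin

definition binvecs :: "nat \<Rightarrow> (nat \<Rightarrow> real) set" where
  "binvecs k = {0..<k} \<rightarrow>\<^sub>E {0, 1}"

definition rbm_weight ::
  "nat \<Rightarrow> nat \<Rightarrow> (nat \<Rightarrow> nat \<Rightarrow> real) \<Rightarrow> (nat \<Rightarrow> real) \<Rightarrow> (nat \<Rightarrow> real)
   \<Rightarrow> (nat \<Rightarrow> real) \<Rightarrow> (nat \<Rightarrow> real) \<Rightarrow> real" where
  "rbm_weight n m W B C v h =
     exp ((\<Sum>i<m. \<Sum>j<n. h i * W i j * v j) + (\<Sum>j<n. B j * v j) + (\<Sum>i<m. C i * h i))"

definition rbm_Z ::
  "nat \<Rightarrow> nat \<Rightarrow> (nat \<Rightarrow> nat \<Rightarrow> real) \<Rightarrow> (nat \<Rightarrow> real) \<Rightarrow> (nat \<Rightarrow> real) \<Rightarrow> real" where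
  "rbm_Z n m W B C = (\<Sum>v\<in>binvecs n. \<Sum>h\<in>binvecs m. rbm_weight n m W B C v h)"

definition rbm_joint ::
  "nat \<Rightarrow> nat \<Rightarrow> (nat \<Rightarrow> nat \<Rightarrow> real) \<Rightarrow> (nat \<Rightarrow> real) \<Rightarrow> (nat \<Rightarrow> real)
   \<Rightarrow> (nat \<Rightarrow> real) \<Rightarrow> (nat \<Rightarrow> real) \<Rightarrow> real" where
  "rbm_joint n m W B C v h = rbm_weight n m W B C v h / rbm_Z n m W B C"

definition rbm_marginal ::
  "nat \<Rightarrow> nat \<Rightarrow> (nat \<Rightarrow> nat \<Rightarrow> real) \<Rightarrow> (nat \<Rightarrow> real) \<Rightarrow> (nat \<Rightarrow> real)
   \<Rightarrow> (nat \<Rightarrow> real) \<Rightarrow> real" where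
  "rbm_marginal n m W B C v = (\<Sum>h\<in>binvecs m. rbm_joint n m W B C v h)"

definition is_distribution :: "'a set \<Rightarrow> ('a \<Rightarrow> real) \<Rightarrow> bool" where
  "is_distribution S p \<longleftrightarrow> (\<forall>x\<in>S. p x \<ge> 0) \<and> (\<Sum>x\<in>S. p x) = 1"

definition KL_div :: "'a set \<Rightarrow> ('a \<Rightarrow> real) \<Rightarrow> ('a \<Rightarrow> real) \<Rightarrow> real" where
  "KL_div S p q = (\<Sum>x\<in>S. if p x = 0 then 0 else p x * ln (p x / q x))"

end

theory Submission
  imports Defs
begin

text \<open>Split a visible state as \<open>v = (v\<^sub>0, t)\<close>, where the tail \<open>t\<close> collects the remaining
  \<open>N = n - 1\<close> units. Summing out the hidden units turns the RBM weight into
  \<open>exp (B\<cdot>v) \<Prod>\<^sub>i (1 + exp (W\<^sub>i\<cdot>v + C\<^sub>i))\<close>. Enumerate the \<open>2\<^sup>N - 1\<close> nonzero tails as \<open>y\<^sub>i\<close>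
  and make hidden unit \<open>i\<close> sharp: its input is \<open>b\<^sub>i v\<^sub>0 + c\<^sub>i - l\<cdot>dist(t, y\<^sub>i)\<close>, so as
  \<open>l \<rightarrow> \<infinity>\<close> it contributes the factor \<open>1 + exp (b\<^sub>i v\<^sub>0 + c\<^sub>i)\<close> on the two states with tail
  \<open>y\<^sub>i\<close> and the factor 1 elsewhere. The visible biases fit the two states with zero tail; a
  large penalty \<open>-\<mu>\<close> on the tail units pushes the remaining states below their targets, and
  \<open>b\<^sub>i, c\<^sub>i\<close> then fit the two states with tail \<open>y\<^sub>i\<close> exactly. So every strictly positive
  function, in particular \<open>p + \<delta>\<close>, is a limit of unnormalised marginals up to a constant
  factor \<open>K\<close>. Since \<open>D(p \<parallel> F / \<Sigma>F) \<le> ln (\<Sigma>F / K)\<close> whenever \<open>K p \<le> F\<close>, the divergence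
  is then at most about \<open>ln (1 + 2\<^sup>n \<delta>)\<close>.\<close>

lemma finite_binvecs: "finite (binvecs k)"
  unfolding binvecs_def by (simp add: finite_PiE)

lemma card_binvecs: "card (binvecs k) = 2 ^ k"
  unfolding binvecs_def by (simp add: card_PiE numeral_2_eq_2)

definition rbm_unnormalised_marginal ::
  "nat \<Rightarrow> nat \<Rightarrow> (nat \<Rightarrow> nat \<Rightarrow> real) \<Rightarrow> (nat \<Rightarrow> real) \<Rightarrow> (nat \<Rightarrow> real)
   \<Rightarrow> (nat \<Rightarrow> real) \<Rightarrow> real" where
  "rbm_unnormalised_marginal n m W B C v =
     exp (\<Sum>j<n. B j * v j) * (\<Prod>i<m. 1 + exp ((\<Sum>j<n. W i j * v j) + C i))"

lemma sum_rbm_weight_hidden: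
  "(\<Sum>h\<in>binvecs m. rbm_weight n m W B C v h) = rbm_unnormalised_marginal n m W B C v"
proof -
  define a where "a i = (\<Sum>j<n. W i j * v j) + C i" for i
  have weight: "rbm_weight n m W B C v h = exp (\<Sum>j<n. B j * v j) * (\<Prod>i\<in>{0..<m}. exp (h i * a i))"
    for h
  proof -
    have "(\<Sum>i<m. \<Sum>j<n. h i * W i j * v j) + (\<Sum>j<n. B j * v j) + (\<Sum>i<m. C i * h i)
        = (\<Sum>j<n. B j * v j) + (\<Sum>i\<in>{0..<m}. h i * a i)"
      by (simp add: a_def atLeast0LessThan sum.distrib sum_distrib_left algebra_simps)
    then show ?thesis
      unfolding rbm_weight_def by (simp only: exp_add exp_sum[OF finite_atLeastLessThan])
  qed
  have "(\<Sum>h\<in>binvecs m. \<Prod>i\<in>{0..<m}. exp (h i * a i)) = (\<Prod>i\<in>{0..<m}. \<Sum>x\<in>{0,1::real}. exp (x * a i))"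
    unfolding binvecs_def by (rule prod_sum_PiE[symmetric]) auto
  then show ?thesis
    by (simp add: weight rbm_unnormalised_marginal_def a_def atLeast0LessThan flip: sum_distrib_left)
qed

lemma rbm_marginal_eq:
  "rbm_marginal n m W B C = (\<lambda>v.
     rbm_unnormalised_marginal n m W B C v / (\<Sum>u\<in>binvecs n. rbm_unnormalised_marginal n m W B C u))"
  unfolding rbm_marginal_def rbm_joint_def rbm_Z_def
  by (simp add: fun_eq_iff sum_rbm_weight_hidden flip: sum_divide_distrib)

lemma KL_div_normalise_le:
  fixes F :: "'a \<Rightarrow> real"
  assumes "finite S" and p: "is_distribution S p" and "K > 0" and F: "\<And>v. v \<in> S \<Longrightarrow> K * p v \<le> F v"
  shows "KL_div S p (\<lambda>v. F v / sum F S) \<le> ln (sum F S / K)"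
proof -
  have "K = (\<Sum>v\<in>S. K * p v)"
    using p by (simp add: is_distribution_def flip: sum_distrib_left)
  also have "\<dots> \<le> sum F S"
    using F by (rule sum_mono)
  finally have sum_ge: "K \<le> sum F S" .
  have term_le: "(if p v = 0 then 0 else p v * ln (p v / (F v / sum F S))) \<le> p v * ln (sum F S / K)"
    if v: "v \<in> S" for v
  proof (cases "p v = 0")
    case False
    with p v have "p v > 0" by (force simp: is_distribution_def)
    moreover from this have "F v > 0"
      using mult_pos_pos[OF \<open>K > 0\<close>] F[OF v] by fastforce
    moreover have "p v / (F v / sum F S) \<le> sum F S / K"
      using F[OF v] \<open>K > 0\<close> sum_ge \<open>F v > 0\<close> by (simp add: field_simps mult_left_mono)
    ultimately show ?thesis
      using \<open>K > 0\<close> sum_ge by (simp add: mult_left_mono)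
  qed (simp add: assms(3) sum_ge)
  have "KL_div S p (\<lambda>v. F v / sum F S) \<le> (\<Sum>v\<in>S. p v * ln (sum F S / K))"
    unfolding KL_div_def using term_le by (rule sum_mono)
  also have "\<dots> = ln (sum F S / K)"
    using p by (simp add: is_distribution_def flip: sum_distrib_right)
  finally show ?thesis .
qed

lemma tendsto_exp_minus_mult_at_top:
  fixes a d :: real
  assumes "d \<ge> 0"
  shows "((\<lambda>l. exp (a - l * d)) \<longlongrightarrow> (if d = 0 then exp a else 0)) at_top"
proof (cases "d = 0")
  case False
  with assms have "filterlim (\<lambda>l. a - l * d) at_bot at_top"
    by real_asymp
  then show ?thesis
    using False by (simp add: filterlim_compose[OF exp_at_bot])
qed simp

lemma exists_softplus_fit:
  fixes u t :: "real \<Rightarrow> real"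
  assumes "\<And>x. x \<in> {0, 1} \<Longrightarrow> 0 < u x \<and> u x < t x"
  shows "\<exists>b c. \<forall>x\<in>{0, 1}. u x * (1 + exp (b * x + c)) = t x"
proof -
  define c where "c = ln (t 0 / u 0 - 1)"
  define b where "b = ln (t 1 / u 1 - 1) - c"
  have "u x * (1 + exp (b * x + c)) = t x" if "x \<in> {0, 1}" for x
    using that assms[OF that] by (auto simp: b_def c_def field_simps)
  then show ?thesis by blast
qed

definition tail_patterns :: "nat \<Rightarrow> (nat \<Rightarrow> real) set" where
  "tail_patterns N = {1..<Suc N} \<rightarrow>\<^sub>E {0, 1}"

lemma finite_tail_patterns: "finite (tail_patterns N)"
  unfolding tail_patterns_def by (simp add: finite_PiE)

lemma card_tail_patterns: "card (tail_patterns N) = 2 ^ N"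
  unfolding tail_patterns_def by (simp add: card_PiE numeral_2_eq_2)

lemma binvecs_Suc_eq_fun_upd:
  assumes "v \<in> binvecs (Suc N)"
  shows "restrict v {1..<Suc N} \<in> tail_patterns N" "v 0 \<in> {0, 1}"
    and "v = (restrict v {1..<Suc N})(0 := v 0)"
  using assms by (auto simp: binvecs_def tail_patterns_def PiE_iff extensional_def fun_eq_iff)

lemma fun_upd_in_binvecs_Suc:
  "t \<in> tail_patterns N \<Longrightarrow> x \<in> {0, 1} \<Longrightarrow> t(0 := x) \<in> binvecs (Suc N)"
  by (auto simp: binvecs_def tail_patterns_def PiE_iff extensional_def)

lemma sum_tail_pattern_pos:
  assumes "t \<in> tail_patterns N" "t \<noteq> (\<lambda>j\<in>{1..<Suc N}. 0)"
  shows "sum t {1..<Suc N} > 0"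
proof -
  from assms obtain j where "j \<in> {1..<Suc N}" "t j \<noteq> 0"
    by (auto simp: tail_patterns_def PiE_iff fun_eq_iff extensional_def split: if_split_asm)
  with assms(1) have j: "j \<in> {1..<Suc N}" "t j = 1"
    by (auto simp: tail_patterns_def)
  have "\<forall>i\<in>{1..<Suc N}. t i \<ge> 0"
    using assms(1) by (auto simp: tail_patterns_def PiE_iff)
  then have "t j \<le> sum t {1..<Suc N}"
    using j(1) by (intro member_le_sum) auto
  with j show ?thesis by simp
qed

lemma sum_square_diff_eq_0_iff:
  assumes "t \<in> tail_patterns N" "v \<in> binvecs (Suc N)"
  shows "(\<Sum>j\<in>{1..<Suc N}. (t j - v j)\<^sup>2) = 0 \<longleftrightarrow> t = restrict v {1..<Suc N}"
proof -
  have "(\<Sum>j\<in>{1..<Suc N}. (t j - v j)\<^sup>2) = 0 \<longleftrightarrow> (\<forall>j\<in>{1..<Suc N}. t j = v j)"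
    by (subst sum_nonneg_eq_0_iff) auto
  also have "\<dots> \<longleftrightarrow> t = restrict v {1..<Suc N}"
    using assms(1) by (auto simp: tail_patterns_def PiE_iff extensional_def fun_eq_iff)
  finally show ?thesis .
qed

lemma ex_enumeration_nonzero_tail_patterns:
  "\<exists>ys. bij_betw ys {..<2 ^ N - 1 :: nat} (tail_patterns N - {\<lambda>j\<in>{1..<Suc N}. 0})"
proof -
  have "(\<lambda>j\<in>{1..<Suc N}. 0) \<in> tail_patterns N"
    by (simp add: tail_patterns_def)
  then have "card (tail_patterns N - {\<lambda>j\<in>{1..<Suc N}. 0}) = 2 ^ N - 1"
    by (simp add: card_tail_patterns finite_tail_patterns)
  then show ?thesis
    using ex_bij_betw_nat_finite[of "tail_patterns N - {\<lambda>j\<in>{1..<Suc N}. 0}"]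
    by (simp add: finite_tail_patterns atLeast0LessThan)
qed

lemma sum_lessThan_Suc_split_0: "(\<Sum>j<Suc N. f j) = f 0 + (\<Sum>j\<in>{1..<Suc N}. f j :: real)"
  by (simp add: lessThan_atLeast0 sum.atLeast_Suc_lessThan)

text \<open>On binary inputs \<open>l (2y - 1) x - l y = -l (y - x)\<^sup>2\<close>, so the input of hidden unit \<open>i\<close>
  is \<open>b\<^sub>i v\<^sub>0 + c\<^sub>i\<close> minus \<open>l\<close> times the Hamming distance between the tail of \<open>v\<close> and \<open>ys i\<close>.\<close>

lemma tendsto_rbm_unnormalised_marginal_sharp:
  fixes ys :: "nat \<Rightarrow> nat \<Rightarrow> real" and b c :: "nat \<Rightarrow> real"
  assumes v: "v \<in> binvecs (Suc N)" and ys: "\<And>i. i < m \<Longrightarrow> ys i \<in> tail_patterns N"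
  shows "((\<lambda>l. rbm_unnormalised_marginal (Suc N) m
            (\<lambda>i j. if j = 0 then b i else l * (2 * ys i j - 1))
            (\<lambda>j. if j = 0 then \<beta> else - \<mu>)
            (\<lambda>i. c i - l * sum (ys i) {1..<Suc N}) v)
          \<longlongrightarrow> exp (\<beta> * v 0 - \<mu> * sum v {1..<Suc N}) *
              (\<Prod>i<m. if ys i = restrict v {1..<Suc N} then 1 + exp (b i * v 0 + c i) else 1))
         at_top"
proof -
  define d where "d i = (\<Sum>j\<in>{1..<Suc N}. (ys i j - v j)\<^sup>2)" for i
  have bias: "(\<Sum>j<Suc N. (if j = 0 then \<beta> else - \<mu>) * v j) = \<beta> * v 0 - \<mu> * sum v {1..<Suc N}"
    unfolding sum_lessThan_Suc_split_0 by (simp add: sum_distrib_left sum_negf del: sum.op_ivl_Suc)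
  have coordinate: "l * (2 * ys i j - 1) * v j - l * ys i j = - (l * (ys i j - v j)\<^sup>2)"
    if "i < m" "j \<in> {1..<Suc N}" for i j l
  proof -
    have "ys i j \<in> {0, 1}" "v j \<in> {0, 1}"
      using ys[OF that(1)] v that(2) by (auto simp: tail_patterns_def binvecs_def PiE_iff)
    then show ?thesis by (auto simp: power2_eq_square algebra_simps)
  qed
  have hidden: "(\<Sum>j<Suc N. (if j = 0 then b i else l * (2 * ys i j - 1)) * v j)
      + (c i - l * sum (ys i) {1..<Suc N}) = b i * v 0 + c i - l * d i" if "i < m" for i l
  proof -
    have "(\<Sum>j\<in>{1..<Suc N}. (if j = 0 then b i else l * (2 * ys i j - 1)) * v j)
        - l * sum (ys i) {1..<Suc N}
        = (\<Sum>j\<in>{1..<Suc N}. l * (2 * ys i j - 1) * v j - l * ys i j)"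
      by (simp add: sum_subtractf sum_distrib_left del: sum.op_ivl_Suc)
    also have "\<dots> = - (l * d i)"
      by (simp add: coordinate[OF that] d_def sum_distrib_left sum_negf del: sum.op_ivl_Suc)
    finally show ?thesis
      unfolding sum_lessThan_Suc_split_0 by simp
  qed
  have limit: "((\<lambda>l. 1 + exp (b i * v 0 + c i - l * d i)) \<longlongrightarrow>
      (if ys i = restrict v {1..<Suc N} then 1 + exp (b i * v 0 + c i) else 1)) at_top"
    if "i < m" for i
  proof -
    have "d i \<ge> 0" unfolding d_def by (intro sum_nonneg) auto
    then have "((\<lambda>l. 1 + exp (b i * v 0 + c i - l * d i)) \<longlongrightarrow>
        1 + (if d i = 0 then exp (b i * v 0 + c i) else 0)) at_top"
      by (intro tendsto_add tendsto_const tendsto_exp_minus_mult_at_top)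
    moreover have "d i = 0 \<longleftrightarrow> ys i = restrict v {1..<Suc N}"
      unfolding d_def by (rule sum_square_diff_eq_0_iff[OF ys[OF that] v])
    ultimately show ?thesis by (cases "ys i = restrict v {1..<Suc N}") simp_all
  qed
  have product: "(\<Prod>i<m. 1 + exp ((\<Sum>j<Suc N. (if j = 0 then b i else l * (2 * ys i j - 1)) * v j)
      + (c i - l * sum (ys i) {1..<Suc N}))) = (\<Prod>i<m. 1 + exp (b i * v 0 + c i - l * d i))" for l
    by (rule prod.cong) (simp_all only: lessThan_iff hidden)
  show ?thesis
    unfolding rbm_unnormalised_marginal_def bias product
    by (intro tendsto_mult tendsto_const tendsto_prod limit) simp
qed

lemma exists_tail_penalty:
  fixes h :: "(nat \<Rightarrow> real) \<Rightarrow> real \<Rightarrow> real"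
  assumes "\<And>t x. t \<in> tail_patterns N - {\<lambda>j\<in>{1..<Suc N}. 0} \<Longrightarrow> x \<in> {0, 1} \<Longrightarrow> h t x > 0"
  shows "\<exists>\<mu>. \<forall>t\<in>tail_patterns N - {\<lambda>j\<in>{1..<Suc N}. 0}. \<forall>x\<in>{0, 1}.
           exp (\<beta> * x - \<mu> * sum t {1..<Suc N}) < h t x"
proof -
  have "\<forall>\<^sub>F \<mu> in at_top. \<forall>t\<in>tail_patterns N - {\<lambda>j\<in>{1..<Suc N}. 0}. \<forall>x\<in>{0, 1}.
          exp (\<beta> * x - \<mu> * sum t {1..<Suc N}) < h t x"
  proof (intro eventually_ball_finite ballI)
    fix t x assume t: "t \<in> tail_patterns N - {\<lambda>j\<in>{1..<Suc N}. 0}" and x: "x \<in> {0, 1::real}"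
    have "sum t {1..<Suc N} > 0"
      using t by (intro sum_tail_pattern_pos) auto
    then have "((\<lambda>\<mu>. exp (\<beta> * x - \<mu> * sum t {1..<Suc N})) \<longlongrightarrow> 0) at_top"
      using tendsto_exp_minus_mult_at_top[of "sum t {1..<Suc N}" "\<beta> * x"] by simp
    then show "\<forall>\<^sub>F \<mu> in at_top. exp (\<beta> * x - \<mu> * sum t {1..<Suc N}) < h t x"
      using assms[OF t x] by (rule order_tendstoD)
  qed (simp_all add: finite_tail_patterns)
  then show ?thesis
    unfolding eventually_at_top_linorder by blast
qed

lemma exists_rbm_sharp_parameters:
  fixes g :: "(nat \<Rightarrow> real) \<Rightarrow> real" and ys :: "nat \<Rightarrow> nat \<Rightarrow> real"
  assumes g_pos: "\<And>v. v \<in> binvecs (Suc N) \<Longrightarrow> g v > 0"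
    and ys_in: "\<And>i. i < m \<Longrightarrow> ys i \<in> tail_patterns N - {z}"
    and z: "z = (\<lambda>j\<in>{1..<Suc N}. 0)"
  shows "\<exists>K>0. \<exists>\<beta> \<mu> b c. (\<forall>x\<in>{0, 1}. exp (\<beta> * x) = K * g (z(0 := x))) \<and>
    (\<forall>i<m. \<forall>x\<in>{0, 1}. exp (\<beta> * x - \<mu> * sum (ys i) {1..<Suc N}) * (1 + exp (b i * x + c i))
       = K * g ((ys i)(0 := x)))"
proof -
  define K where "K = 1 / g (z(0 := 0))"
  define \<beta> where "\<beta> = ln (K * g (z(0 := 1)))"
  have "z \<in> tail_patterns N"
    by (simp add: z tail_patterns_def)
  then have g_z_pos: "g (z(0 := x)) > 0" if "x \<in> {0, 1}" for x
    using that by (simp add: g_pos fun_upd_in_binvecs_Suc)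
  have K_pos: "K > 0"
    using g_z_pos by (simp add: K_def)
  have tail_zero: "exp (\<beta> * x) = K * g (z(0 := x))" if "x \<in> {0, 1}" for x
  proof -
    have "exp \<beta> = K * g (z(0 := 1))"
      unfolding \<beta>_def using K_pos g_z_pos[of 1] by simp
    moreover have "K * g (z(0 := 0)) = 1"
      unfolding K_def using g_z_pos[of 0] by simp
    ultimately show ?thesis
      using that by auto
  qed
  obtain \<mu> where \<mu>: "\<forall>t\<in>tail_patterns N - {z}. \<forall>x\<in>{0, 1}.
      exp (\<beta> * x - \<mu> * sum t {1..<Suc N}) < K * g (t(0 := x))"
    using exists_tail_penalty[of N "\<lambda>t x. K * g (t(0 := x))" \<beta>] K_pos
    unfolding z by (auto simp: g_pos fun_upd_in_binvecs_Suc)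
  have "\<forall>i<m. \<exists>b c. \<forall>x\<in>{0, 1}.
      exp (\<beta> * x - \<mu> * sum (ys i) {1..<Suc N}) * (1 + exp (b * x + c)) = K * g ((ys i)(0 := x))"
    using \<mu> ys_in by (intro allI impI exists_softplus_fit) auto
  then obtain b c where "\<forall>i<m. \<forall>x\<in>{0, 1}.
      exp (\<beta> * x - \<mu> * sum (ys i) {1..<Suc N}) * (1 + exp (b i * x + c i)) = K * g ((ys i)(0 := x))"
    by metis
  with K_pos tail_zero show ?thesis
    by blast
qed

lemma rbm_sharp_limit_eq:
  fixes g :: "(nat \<Rightarrow> real) \<Rightarrow> real" and ys :: "nat \<Rightarrow> nat \<Rightarrow> real"
  assumes ys: "bij_betw ys {..<m} (tail_patterns N - {\<lambda>j\<in>{1..<Suc N}. 0})"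
    and tail_zero: "\<forall>x\<in>{0, 1}. exp (\<beta> * x) = K * g ((\<lambda>j\<in>{1..<Suc N}. 0)(0 := x))"
    and tail_ys: "\<forall>i<m. \<forall>x\<in>{0, 1}. exp (\<beta> * x - \<mu> * sum (ys i) {1..<Suc N}) *
       (1 + exp (b i * x + c i)) = K * g ((ys i)(0 := x))"
    and v: "v \<in> binvecs (Suc N)"
  shows "exp (\<beta> * v 0 - \<mu> * sum v {1..<Suc N}) *
    (\<Prod>i<m. if ys i = restrict v {1..<Suc N} then 1 + exp (b i * v 0 + c i) else 1) = K * g v"
proof -
  define t where "t = restrict v {1..<Suc N}"
  have t: "t \<in> tail_patterns N" and x: "v 0 \<in> {0, 1}" and v_eq: "v = t(0 := v 0)"
    using binvecs_Suc_eq_fun_upd[OF v] unfolding t_def by blast+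
  from v_eq have g_v: "g v = g (t(0 := v 0))"
    by (rule arg_cong)
  have "sum v {1..<Suc N} = sum t {1..<Suc N}"
    by (simp add: t_def)
  moreover have "exp (\<beta> * v 0 - \<mu> * sum t {1..<Suc N}) *
      (\<Prod>i<m. if ys i = t then 1 + exp (b i * v 0 + c i) else 1) = K * g v"
  proof (cases "t = (\<lambda>j\<in>{1..<Suc N}. 0)")
    case True
    have "ys i \<noteq> t" if "i < m" for i
      using bij_betwE[OF ys] that True by blast
    then have "(\<Prod>i<m. if ys i = t then 1 + exp (b i * v 0 + c i) else 1) = 1"
      by (intro prod.neutral) simp
    then show ?thesis
      using tail_zero[rule_format, OF x] by (simp add: True g_v)
  next
    case False
    with t have "t \<in> ys ` {..<m}"
      using bij_betw_imp_surj_on[OF ys] by blast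
    then obtain i where i: "i < m" "ys i = t"
      by blast
    have "{i' \<in> {..<m}. ys i' = t} = {i}"
      using i inj_onD[OF bij_betw_imp_inj_on[OF ys]] by blast
    then have "(\<Prod>i<m. if ys i = t then 1 + exp (b i * v 0 + c i) else 1) = 1 + exp (b i * v 0 + c i)"
      using prod.inter_filter[of "{..<m}" "\<lambda>i. 1 + exp (b i * v 0 + c i)" "\<lambda>i. ys i = t"] by simp
    then show ?thesis
      using tail_ys[rule_format, OF i(1) x] by (simp only: i(2) g_v)
  qed
  ultimately show ?thesis
    unfolding t_def by simp
qed

lemma rbm_approximates_positive_function:
  fixes g :: "(nat \<Rightarrow> real) \<Rightarrow> real"
  assumes g_pos: "\<And>v. v \<in> binvecs (Suc N) \<Longrightarrow> g v > 0"
  shows "\<exists>K>0. \<exists>(W :: real \<Rightarrow> nat \<Rightarrow> nat \<Rightarrow> real) (B :: nat \<Rightarrow> real) (C :: real \<Rightarrow> nat \<Rightarrow> real).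
    \<forall>v\<in>binvecs (Suc N).
      ((\<lambda>l. rbm_unnormalised_marginal (Suc N) (2 ^ N - 1) (W l) B (C l) v) \<longlongrightarrow> K * g v) at_top"
proof -
  define z where "z = (\<lambda>j\<in>{1..<Suc N}. 0 :: real)"
  obtain ys where ys: "bij_betw ys {..<2 ^ N - 1 :: nat} (tail_patterns N - {z})"
    using ex_enumeration_nonzero_tail_patterns unfolding z_def by blast
  have ys_in: "ys i \<in> tail_patterns N - {z}" if "i < 2 ^ N - (1 :: nat)" for i
    using that bij_betwE[OF ys] by blast
  obtain K \<beta> \<mu> b c where "K > 0"
    and "\<forall>x\<in>{0, 1}. exp (\<beta> * x) = K * g (z(0 := x))"
    and "\<forall>i < 2 ^ N - (1 :: nat). \<forall>x\<in>{0, 1}. exp (\<beta> * x - \<mu> * sum (ys i) {1..<Suc N}) *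
       (1 + exp (b i * x + c i)) = K * g ((ys i)(0 := x))"
    using exists_rbm_sharp_parameters[where g = g and ys = ys and z = z, OF g_pos ys_in z_def] by blast
  note limit_eq = rbm_sharp_limit_eq[OF ys[unfolded z_def] this(2,3)[unfolded z_def]]
  have "((\<lambda>l. rbm_unnormalised_marginal (Suc N) (2 ^ N - 1)
      (\<lambda>i j. if j = 0 then b i else l * (2 * ys i j - 1)) (\<lambda>j. if j = 0 then \<beta> else - \<mu>)
      (\<lambda>i. c i - l * sum (ys i) {1..<Suc N}) v) \<longlongrightarrow> K * g v) at_top"
    if v: "v \<in> binvecs (Suc N)" for v
    unfolding limit_eq[OF v, symmetric] using ys_in
    by (intro tendsto_rbm_unnormalised_marginal_sharp[OF v]) blast
  then show ?thesis
    by (intro exI[of _ K] conjI \<open>K > 0\<close> exI ballI)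
qed

lemma eventually_KL_div_normalise_less:
  fixes F :: "'b \<Rightarrow> 'a \<Rightarrow> real" and \<delta> :: real
  assumes "finite S" and p: "is_distribution S p" and "K > 0" and "\<delta> > 0"
    and "ln (1 + \<delta> * card S) < \<epsilon>"
    and F: "\<And>v. v \<in> S \<Longrightarrow> ((\<lambda>l. F l v) \<longlongrightarrow> K * (p v + \<delta>)) L"
  shows "\<forall>\<^sub>F l in L. KL_div S p (\<lambda>v. F l v / sum (F l) S) < \<epsilon>"
proof -
  have "\<forall>\<^sub>F l in L. \<forall>v\<in>S. K * p v < F l v"
  proof (rule eventually_ball_finite[OF \<open>finite S\<close>], rule ballI)
    fix v assume "v \<in> S"
    have "K * p v < K * (p v + \<delta>)"
      using \<open>K > 0\<close> \<open>\<delta> > 0\<close> by simp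
    with F[OF \<open>v \<in> S\<close>] show "\<forall>\<^sub>F l in L. K * p v < F l v"
      by (rule order_tendstoD(1))
  qed
  moreover have "\<forall>\<^sub>F l in L. ln (sum (F l) S / K) < \<epsilon>"
  proof (rule order_tendstoD(2))
    have "(\<Sum>v\<in>S. K * (p v + \<delta>)) / K = 1 + \<delta> * card S"
      using p \<open>K > 0\<close> by (simp add: is_distribution_def sum.distrib flip: sum_distrib_left)
    moreover have "((\<lambda>l. sum (F l) S / K) \<longlongrightarrow> (\<Sum>v\<in>S. K * (p v + \<delta>)) / K) L"
      using F by (intro tendsto_divide tendsto_sum tendsto_const) (use \<open>K > 0\<close> in auto)
    ultimately have "((\<lambda>l. sum (F l) S / K) \<longlongrightarrow> 1 + \<delta> * card S) L"
      by simp
    moreover have "1 + \<delta> * card S > 0"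
      using \<open>\<delta> > 0\<close> by (intro add_pos_nonneg) auto
    ultimately show "((\<lambda>l. ln (sum (F l) S / K)) \<longlongrightarrow> ln (1 + \<delta> * card S)) L"
      by (intro tendsto_ln) auto
  qed fact
  ultimately show ?thesis
  proof eventually_elim
    case (elim l)
    then have "KL_div S p (\<lambda>v. F l v / sum (F l) S) \<le> ln (sum (F l) S / K)"
      by (intro KL_div_normalise_le \<open>finite S\<close> p \<open>K > 0\<close>) (simp add: less_imp_le)
    with elim show ?case by simp
  qed
qed

theorem corollary1:
  fixes n :: nat and p :: "(nat \<Rightarrow> real) \<Rightarrow> real" and \<epsilon> :: real
  assumes "n \<ge> 1"
    and "is_distribution (binvecs n) p"
    and "\<epsilon> > 0"
  shows "\<exists>(W :: nat \<Rightarrow> nat \<Rightarrow> real) (B :: nat \<Rightarrow> real) (C :: nat \<Rightarrow> real).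
           KL_div (binvecs n) p (rbm_marginal n (2 ^ n div 2 - 1) W B C) < \<epsilon>"
proof -
  obtain N where n: "n = Suc N"
    using assms(1) by (cases n) auto
  define \<delta> :: real where "\<delta> = (exp (\<epsilon> / 2) - 1) / 2 ^ n"
  have "\<delta> > 0" and "ln (1 + \<delta> * card (binvecs n)) < \<epsilon>"
    using assms(3) by (simp_all add: \<delta>_def card_binvecs)
  have "p v + \<delta> > 0" if "v \<in> binvecs (Suc N)" for v
    using assms(2) that \<open>\<delta> > 0\<close> by (simp add: is_distribution_def n add_nonneg_pos)
  then obtain K W B C where "K > 0" and lim: "\<forall>v\<in>binvecs n.
      ((\<lambda>l :: real. rbm_unnormalised_marginal n (2 ^ N - 1) (W l) B (C l) v) \<longlongrightarrow> K * (p v + \<delta>)) at_top"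
    using rbm_approximates_positive_function[of N "\<lambda>v. p v + \<delta>"] unfolding n by blast
  have "\<forall>\<^sub>F l in at_top. KL_div (binvecs n) p (rbm_marginal n (2 ^ N - 1) (W l) B (C l)) < \<epsilon>"
    unfolding rbm_marginal_eq
    using lim \<open>K > 0\<close> \<open>\<delta> > 0\<close> \<open>ln (1 + \<delta> * card (binvecs n)) < \<epsilon>\<close>
    by (intro eventually_KL_div_normalise_less[where K = K and \<delta> = \<delta>] finite_binvecs assms(2)) auto
  then obtain l where "KL_div (binvecs n) p (rbm_marginal n (2 ^ N - 1) (W l) B (C l)) < \<epsilon>"
    using eventually_happens'[OF trivial_limit_at_top_linorder] by blast
  moreover have "2 ^ n div 2 - 1 = 2 ^ N - (1 :: nat)"
    by (simp add: n)
  ultimately show ?thesis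
    by auto
qed

end
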